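(* Let $\mathcal{A}=\mathcal{A}(R,\boldsymbol{\sigma},\boldsymbol{t})$ be a twisted generalized Weyl algebra of rank $n$ where $R$ is a principal ideal domain, $t_1,\dots,t_n$ are regular (nonzero) in $R$ and satisfy the consistency equations. Then $\mathcal{A}$, with its $\mathbb{Z}^n$-gradation, is a crystalline graded ring; i.e. for each $g\in\mathbb{Z}^n$ there exists $a_g\in\mathcal{A}_g$ such that $\mathcal{A}_g$ is free of rank one with basis $a_g$ both as a left and as a right $\mathcal{A}_0=R$-module.
   Context: Let $\Bbbk$ be a field, $R$ a unital $\Bbbk$-algebra, $\sigma_1^{1/2},\dots,\sigma_n^{1/2}$ commuting automorphisms of $R$ ($\sigma_i=(\sigma_i^{1/2})^2$), $t_1,\dots,t_n\in Z(R)$. The TGWC $\tilde{\mathcal{A}}(R,\boldsymbol{\sigma},\boldsymbol{t})$ is obtained from $R$ by adjoining $X_1^\pm,\dots,X_n^\pm$ with relations $X_i^\pm r=\sigma_i^{\pm1}(r)X_i^\pm$, $X_i^\pm X_i^\mp=\sigma_i^{\pm1/2}(t_i)$, $[X_i^\pm,X_j^\mp]=0$ ($i\ne j$), $\mathbb{Z}^n$-graded by $\deg r=0$, $\deg X_i^\pm=\pm\mathbf{e}_i$. The TGWA $\mathcal{A}(R,\boldsymbol{\sigma},\boldsymbol{t})$ is $\tilde{\mathcal{A}}$ modulo the sum of all graded ideals intersecting the degree-zero part trivially. Consistency equations: $\sigma_j^{1/2}(t_i)\sigma_i^{1/2}(t_j)=\sigma_j^{-1/2}(t_i)\sigma_i^{-1/2}(t_j)$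 ($i\ne j$) and $\sigma_i^{1/2}\sigma_j^{1/2}(t_k)\sigma_i^{-1/2}\sigma_j^{-1/2}(t_k)=\sigma_i^{1/2}\sigma_j^{-1/2}(t_k)\sigma_i^{-1/2}\sigma_j^{1/2}(t_k)$ ($i,j,k$ pairwise distinct); under these $R$ is identified with $\mathcal{A}_0$. A group-graded ring $D=\bigoplus_{g}D_g$ is crystalline graded if each $D_g$ is free of rank one as a left and as a right $D_e$-module on a common generator $a_g\in D_g$. *)

theory Defs
  imports "HOL-Algebra.Algebra"
begin

definition Zn :: "nat \<Rightarrow> (nat \<Rightarrow> int) set" where
  "Zn n = {g. \<forall>i\<ge>n. g i = 0}"

definition unitv :: "nat \<Rightarrow> nat \<Rightarrow> int" where
  "unitv i = (\<lambda>j. if j = i then 1 else 0)"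

definition zadd :: "(nat \<Rightarrow> int) \<Rightarrow> (nat \<Rightarrow> int) \<Rightarrow> nat \<Rightarrow> int" where
  "zadd g h = (\<lambda>j. g j + h j)"

definition zneg :: "(nat \<Rightarrow> int) \<Rightarrow> nat \<Rightarrow> int" where
  "zneg g = (\<lambda>j. - g j)"

definition zzero :: "nat \<Rightarrow> int" where
  "zzero = (\<lambda>_. 0)"

definition Zn_graded_ring ::
  "('a, 'b) ring_scheme \<Rightarrow> nat \<Rightarrow> ((nat \<Rightarrow> int) \<Rightarrow> 'a set) \<Rightarrow> bool" where
  "Zn_graded_ring A n D \<longleftrightarrow>
     ring A
   \<and> (\<forall>g\<in>Zn n. additive_subgroup (D g) A)
   \<and> (\<forall>g\<in>Zn n. \<forall>h\<in>Zn n. \<forall>x\<in>D g. \<forall>y\<in>D h. x \<otimes>\<^bsub>A\<^esub> y \<in> D (zadd g h))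
   \<and> (\<forall>a\<in>carrier A. \<exists>S c. finite S \<and> S \<subseteq> Zn n \<and> (\<forall>g\<in>S. c g \<in> D g)
                            \<and> a = finsum A c S)
   \<and> (\<forall>S c. finite S \<and> S \<subseteq> Zn n \<and> (\<forall>g\<in>S. c g \<in> D g) \<and> finsum A c S = \<zero>\<^bsub>A\<^esub>
            \<longrightarrow> (\<forall>g\<in>S. c g = \<zero>\<^bsub>A\<^esub>))"

definition Zn_graded_ideal ::
  "('a, 'b) ring_scheme \<Rightarrow> nat \<Rightarrow> ((nat \<Rightarrow> int) \<Rightarrow> 'a set) \<Rightarrow> 'a set \<Rightarrow> bool" where
  "Zn_graded_ideal A n D I \<longleftrightarrow>
     ideal I A
   \<and> (\<forall>S c. finite S \<and> S \<subseteq> Zn n \<and> (\<forall>g\<in>S. c g \<in> D g) \<and> finsum A c S \<in> I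
            \<longrightarrow> (\<forall>g\<in>S. c g \<in> I))"

definition crystalline_graded ::
  "('a, 'b) ring_scheme \<Rightarrow> 'g set \<Rightarrow> 'g \<Rightarrow> ('g \<Rightarrow> 'a set) \<Rightarrow> bool" where
  "crystalline_graded A G e D \<longleftrightarrow>
     (\<forall>g\<in>G. \<exists>a\<in>D g.
        (\<forall>x\<in>D g. \<exists>!r. r \<in> D e \<and> x = r \<otimes>\<^bsub>A\<^esub> a)
      \<and> (\<forall>x\<in>D g. \<exists>!r. r \<in> D e \<and> x = a \<otimes>\<^bsub>A\<^esub> r))"

text \<open>sigma_half i is sigma_i^{1/2}; its inverse sigma_i^{-1/2}.\<close>

definition sig_m :: "('r, 'c) ring_scheme \<Rightarrow> (nat \<Rightarrow> 'r \<Rightarrow> 'r) \<Rightarrow> nat \<Rightarrow> 'r \<Rightarrow> 'r" where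
  "sig_m R sh i = inv_into (carrier R) (sh i)"

definition TGW_datum ::
  "('k, 'd) ring_scheme \<Rightarrow> ('r, 'c) ring_scheme \<Rightarrow> ('k \<Rightarrow> 'r) \<Rightarrow> nat
   \<Rightarrow> (nat \<Rightarrow> 'r \<Rightarrow> 'r) \<Rightarrow> (nat \<Rightarrow> 'r) \<Rightarrow> bool" where
  "TGW_datum K R hK n sh t \<longleftrightarrow>
     field K \<and> ring R \<and> hK \<in> ring_hom K R
   \<and> (\<forall>k\<in>carrier K. \<forall>r\<in>carrier R. hK k \<otimes>\<^bsub>R\<^esub> r = r \<otimes>\<^bsub>R\<^esub> hK k)
   \<and> (\<forall>i<n. sh i \<in> ring_iso R R)
   \<and> (\<forall>i<n. \<forall>k\<in>carrier K. sh i (hK k) = hK k)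
   \<and> (\<forall>i<n. \<forall>j<n. \<forall>r\<in>carrier R. sh i (sh j r) = sh j (sh i r))
   \<and> (\<forall>i<n. t i \<in> carrier R \<and> (\<forall>r\<in>carrier R. t i \<otimes>\<^bsub>R\<^esub> r = r \<otimes>\<^bsub>R\<^esub> t i))"

definition TGW_consistent ::
  "('r, 'c) ring_scheme \<Rightarrow> nat \<Rightarrow> (nat \<Rightarrow> 'r \<Rightarrow> 'r) \<Rightarrow> (nat \<Rightarrow> 'r) \<Rightarrow> bool" where
  "TGW_consistent R n sh t \<longleftrightarrow>
     (\<forall>i<n. \<forall>j<n. i \<noteq> j \<longrightarrow>
        sh j (t i) \<otimes>\<^bsub>R\<^esub> sh i (t j)
        = sig_m R sh j (t i) \<otimes>\<^bsub>R\<^esub> sig_m R sh i (t j))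
   \<and> (\<forall>i<n. \<forall>j<n. \<forall>k<n. i \<noteq> j \<and> j \<noteq> k \<and> i \<noteq> k \<longrightarrow>
        sh i (sh j (t k)) \<otimes>\<^bsub>R\<^esub> sig_m R sh i (sig_m R sh j (t k))
        = sh i (sig_m R sh j (t k)) \<otimes>\<^bsub>R\<^esub> sig_m R sh i (sh j (t k)))"

text \<open>(A, D, rho, Xp, Xm) is (a realisation of) the TGWA A(R,sigma,t):
  a Z^n-graded ring generated by rho(R) (= A_0) and X_i^{+-} of degree +-e_i subject to the
  TGWC relations, such that every nonzero graded ideal meets A_0 nontrivially
  (i.e. the sum of graded ideals meeting the degree zero part trivially has been factored out).\<close>

definition is_TGWA ::
  "('a, 'b) ring_scheme \<Rightarrow> ((nat \<Rightarrow> int) \<Rightarrow> 'a set) \<Rightarrow> ('r \<Rightarrow> 'a) \<Rightarrow> (nat \<Rightarrow> 'a) \<Rightarrow> (nat \<Rightarrow> 'a)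
   \<Rightarrow> ('r, 'c) ring_scheme \<Rightarrow> nat \<Rightarrow> (nat \<Rightarrow> 'r \<Rightarrow> 'r) \<Rightarrow> (nat \<Rightarrow> 'r) \<Rightarrow> bool" where
  "is_TGWA A D rho Xp Xm R n sh t \<longleftrightarrow>
     Zn_graded_ring A n D
   \<and> rho \<in> ring_hom R A \<and> inj_on rho (carrier R) \<and> rho ` carrier R = D zzero
   \<and> (\<forall>i<n. Xp i \<in> D (unitv i) \<and> Xm i \<in> D (zneg (unitv i)))
   \<and> (\<forall>i<n. \<forall>r\<in>carrier R.
         Xp i \<otimes>\<^bsub>A\<^esub> rho r = rho (sh i (sh i r)) \<otimes>\<^bsub>A\<^esub> Xp i
       \<and> Xm i \<otimes>\<^bsub>A\<^esub> rho r = rho (sig_m R sh i (sig_m R sh i r)) \<otimes>\<^bsub>A\<^esub> Xm i)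
   \<and> (\<forall>i<n. Xp i \<otimes>\<^bsub>A\<^esub> Xm i = rho (sh i (t i))
          \<and> Xm i \<otimes>\<^bsub>A\<^esub> Xp i = rho (sig_m R sh i (t i)))
   \<and> (\<forall>i<n. \<forall>j<n. i \<noteq> j \<longrightarrow> Xp i \<otimes>\<^bsub>A\<^esub> Xm j = Xm j \<otimes>\<^bsub>A\<^esub> Xp i)
   \<and> carrier A = generate_ring A (rho ` carrier R \<union> Xp ` {..<n} \<union> Xm ` {..<n})
   \<and> (\<forall>I. Zn_graded_ideal A n D I \<and> I \<inter> D zzero = {\<zero>\<^bsub>A\<^esub>} \<longrightarrow> I = {\<zero>\<^bsub>A\<^esub>})"

end

theory Submission
  imports Defs
begin

text \<open>
  Write sigma^g for the automorphism sigma_0^(g_0) ... sigma_(n-1)^(g_(n-1)) of R. The generators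
  rho r, X_i^+ and X_i^- of degree g satisfy y r = sigma^g(r) y, this is stable under sums and
  products, and since the grading is a direct sum it passes from the ring generated by them to
  every homogeneous element. Consequently the left R-torsion of A is a graded ideal; it meets
  A_0 = R trivially because R is a domain, so by the maximality built into a TGWA it vanishes.
  Since X_i^+ X_i^- and X_i^- X_i^+ are nonzero elements of R, products of the X's give for every g
  homogeneous elements of degree g and -g that are not right zero divisors on homogeneous elements.
  Right multiplication by such an element Y of degree -g embeds A_g into R as an ideal. As R is a
  principal ideal domain, this ideal is generated by a Y for some a in A_g; then A_g = R a, freely by
  torsion-freeness, and A_g = a R by the twisting with sigma^g.
\<close>

lemma zzero_in_Zn [simp]: "zzero \<in> Zn n"
  by (simp add: Zn_def zzero_def)

lemma unitv_in_Zn [simp]: "i < n \<Longrightarrow> unitv i \<in> Zn n"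
  by (simp add: Zn_def unitv_def)

lemma zadd_in_Zn [simp]: "g \<in> Zn n \<Longrightarrow> h \<in> Zn n \<Longrightarrow> zadd g h \<in> Zn n"
  by (simp add: Zn_def zadd_def)

lemma zneg_in_Zn [simp]: "g \<in> Zn n \<Longrightarrow> zneg g \<in> Zn n"
  by (simp add: Zn_def zneg_def)

lemma zadd_zzero [simp]: "zadd zzero g = g" "zadd g zzero = g"
  by (auto simp: zadd_def zzero_def)

lemma zadd_zneg [simp]: "zadd g (zneg g) = zzero" "zadd (zneg g) g = zzero"
  by (auto simp: zadd_def zneg_def zzero_def)

lemma zadd_assoc: "zadd (zadd f g) h = zadd f (zadd g h)"
  by (auto simp: zadd_def)

lemma zadd_unitv: "zadd (unitv i) g = g(i := g i + 1)"
  by (auto simp: zadd_def unitv_def)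

lemma zadd_zneg_unitv: "zadd (zneg (unitv i)) g = g(i := g i - 1)"
  by (auto simp: zadd_def zneg_def unitv_def)

lemma Zn_induct [consumes 1, case_names zero plus minus]:
  assumes "g \<in> Zn n"
    and zero: "P zzero"
    and plus: "\<And>h i. h \<in> Zn n \<Longrightarrow> i < n \<Longrightarrow> P h \<Longrightarrow> P (zadd (unitv i) h)"
    and minus: "\<And>h i. h \<in> Zn n \<Longrightarrow> i < n \<Longrightarrow> P h \<Longrightarrow> P (zadd (zneg (unitv i)) h)"
  shows "P g"
proof -
  have "P g" if "\<forall>i\<ge>m. g i = 0" "m \<le> n" for m g
    using that
  proof (induction m arbitrary: g)
    case 0
    then have "g = zzero" by (auto simp: zzero_def)
    then show ?case using zero by simp
  next
    case (Suc m)
    let ?g = "\<lambda>k. g(m := k)"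
    have in_Zn: "?g k \<in> Zn n" for k
      using Suc.prems by (auto simp: Zn_def)
    have "P (?g k)" for k
    proof (induction k rule: int_induct[where k = 0])
      case base
      show ?case using Suc by auto
    next
      case (step1 k)
      have "zadd (unitv m) (?g k) = ?g (k + 1)"
        by (auto simp: zadd_def unitv_def)
      then show ?case using plus[OF in_Zn, of m k] step1 Suc.prems by (simp add: fun_upd_def)
    next
      case (step2 k)
      have "zadd (zneg (unitv m)) (?g k) = ?g (k - 1)"
        by (auto simp: zadd_def zneg_def unitv_def)
      then show ?case using minus[OF in_Zn, of m k] step2 Suc.prems by (simp add: fun_upd_def)
    qed
    from this[of "g m"] show ?case by simp
  qed
  then show ?thesis using assms(1) by (auto simp: Zn_def)
qed

lemma (in ring) left_stabilizer_subring:
  assumes "additive_subgroup P R"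
  shows "subring {x \<in> carrier R. \<forall>w\<in>P. x \<otimes> w \<in> P} R"
proof -
  interpret P: additive_subgroup P R by (fact assms)
  have [simp]: "w \<in> P \<Longrightarrow> w \<in> carrier R" for w
    using P.a_subset by blast
  show ?thesis
    by (rule subringI) (auto simp: l_minus l_distr m_assoc)
qed

section \<open>Z^n-graded rings\<close>

locale Zn_graded =
  fixes A :: "('a, 'b) ring_scheme" (structure) and n :: nat and D :: "(nat \<Rightarrow> int) \<Rightarrow> 'a set"
  assumes graded: "Zn_graded_ring A n D"

sublocale Zn_graded \<subseteq> ring A
  using graded by (simp add: Zn_graded_ring_def)

context Zn_graded
begin

lemma homogeneous_subgroup: "g \<in> Zn n \<Longrightarrow> additive_subgroup (D g) A"
  using graded by (simp add: Zn_graded_ring_def)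

lemma homogeneous_closed: "g \<in> Zn n \<Longrightarrow> x \<in> D g \<Longrightarrow> x \<in> carrier A"
  using additive_subgroup.a_subset[OF homogeneous_subgroup] by blast

lemma homogeneous_zero: "g \<in> Zn n \<Longrightarrow> \<zero> \<in> D g"
  using additive_subgroup.zero_closed[OF homogeneous_subgroup] .

lemma homogeneous_add: "g \<in> Zn n \<Longrightarrow> x \<in> D g \<Longrightarrow> y \<in> D g \<Longrightarrow> x \<oplus> y \<in> D g"
  using additive_subgroup.a_closed[OF homogeneous_subgroup] .

lemma homogeneous_neg: "g \<in> Zn n \<Longrightarrow> x \<in> D g \<Longrightarrow> \<ominus> x \<in> D g"
  using additive_subgroup.a_inv_closed[OF homogeneous_subgroup] .

lemma homogeneous_mult: "g \<in> Zn n \<Longrightarrow> h \<in> Zn n \<Longrightarrow> x \<in> D g \<Longrightarrow> y \<in> D h \<Longrightarrow> x \<otimes> y \<in> D (zadd g h)"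
  using graded by (simp add: Zn_graded_ring_def)

lemma homogeneous_independent:
  "finite S \<Longrightarrow> S \<subseteq> Zn n \<Longrightarrow> \<forall>g\<in>S. c g \<in> D g \<Longrightarrow> finsum A c S = \<zero> \<Longrightarrow> g \<in> S \<Longrightarrow> c g = \<zero>"
  using graded by (simp add: Zn_graded_ring_def)

lemma homogeneous_component:
  assumes S: "finite S" "S \<subseteq> Zn n" "\<forall>h\<in>S. c h \<in> D h"
    and y: "g \<in> Zn n" "y \<in> D g" "y = finsum A c S"
  shows "y = (if g \<in> S then c g else \<zero>)"
proof -
  let ?T = "insert g S"
  \<comment> \<open>Adding the term -y in degree g turns the decomposition of y into one of zero.\<close>
  define c' where "c' h = (if h \<in> S then c h else \<zero>) \<oplus> (if g = h then \<ominus> y else \<zero>)" for h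
  have c_closed: "c \<in> S \<rightarrow> carrier A"
    using S homogeneous_closed by blast
  have y_closed: "y \<in> carrier A"
    using y homogeneous_closed by blast
  have "finsum A c' ?T
      = finsum A (\<lambda>h. if h \<in> S then c h else \<zero>) ?T \<oplus> finsum A (\<lambda>h. if g = h then \<ominus> y else \<zero>) ?T"
    unfolding c'_def using c_closed y_closed by (intro finsum_addf) auto
  also have "finsum A (\<lambda>h. if h \<in> S then c h else \<zero>) ?T = y"
    unfolding y(3) using S c_closed by (intro add.finprod_mono_neutral_cong_right) auto
  also have "finsum A (\<lambda>h. if g = h then \<ominus> y else \<zero>) ?T = \<ominus> y"
    using S y_closed add.finprod_singleton[of g ?T "\<lambda>_. \<ominus> y"] by simp
  finally have "finsum A c' ?T = \<zero>"
    using y_closed by (simp add: r_neg)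
  moreover have "c' h \<in> D h" if h: "h \<in> ?T" for h
  proof -
    have "h \<in> Zn n"
      using h S y by auto
    moreover have "(if h \<in> S then c h else \<zero>) \<in> D h"
      using S \<open>h \<in> Zn n\<close> homogeneous_zero by simp
    moreover have "(if g = h then \<ominus> y else \<zero>) \<in> D h"
      using y \<open>h \<in> Zn n\<close> homogeneous_zero homogeneous_neg by auto
    ultimately show ?thesis
      unfolding c'_def by (rule homogeneous_add)
  qed
  ultimately have "c' g = \<zero>"
    by (intro homogeneous_independent[of ?T c' g]) (use S y in auto)
  then have "(if g \<in> S then c g else \<zero>) \<ominus> y = \<zero>"
    by (simp add: c'_def a_minus_def)
  then show ?thesis
    using c_closed y_closed by (cases "g \<in> S") (auto simp: r_right_minus_eq Pi_iff)
qed

end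

locale Zn_graded_subgroups = Zn_graded +
  fixes C :: "(nat \<Rightarrow> int) \<Rightarrow> 'a set"
  assumes subgroup: "g \<in> Zn n \<Longrightarrow> additive_subgroup (C g) A"
    and subset_homogeneous: "g \<in> Zn n \<Longrightarrow> C g \<subseteq> D g"
begin

definition span :: "'a set" where
  "span = {finsum A c S | S c. finite S \<and> S \<subseteq> Zn n \<and> (\<forall>g\<in>S. c g \<in> C g)}"

lemma C_closed: "g \<in> Zn n \<Longrightarrow> y \<in> C g \<Longrightarrow> y \<in> carrier A"
  using subset_homogeneous homogeneous_closed by blast

lemma span_closed: "z \<in> span \<Longrightarrow> z \<in> carrier A"
  unfolding span_def using C_closed by (auto intro!: finsum_closed)

lemma span_single: "g \<in> Zn n \<Longrightarrow> y \<in> C g \<Longrightarrow> y \<in> span"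
  unfolding span_def using C_closed
  by (auto intro!: exI[of _ "{g}"] exI[of _ "\<lambda>_. y"])

lemma span_add:
  assumes "z1 \<in> span" "z2 \<in> span"
  shows "z1 \<oplus> z2 \<in> span"
proof -
  obtain S1 c1 where S1: "finite S1" "S1 \<subseteq> Zn n" "\<forall>g\<in>S1. c1 g \<in> C g" "z1 = finsum A c1 S1"
    using assms(1) unfolding span_def by blast
  obtain S2 c2 where S2: "finite S2" "S2 \<subseteq> Zn n" "\<forall>g\<in>S2. c2 g \<in> C g" "z2 = finsum A c2 S2"
    using assms(2) unfolding span_def by blast
  let ?S = "S1 \<union> S2"
  define d1 where "d1 g = (if g \<in> S1 then c1 g else \<zero>)" for g
  define d2 where "d2 g = (if g \<in> S2 then c2 g else \<zero>)" for g
  have d_in_C: "d1 g \<in> C g" "d2 g \<in> C g" if "g \<in> ?S" for g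
    using that S1 S2 additive_subgroup.zero_closed[OF subgroup, of g]
    unfolding d1_def d2_def by auto
  then have d_closed: "d1 \<in> ?S \<rightarrow> carrier A" "d2 \<in> ?S \<rightarrow> carrier A"
    using S1 S2 C_closed by blast+
  have "z1 = finsum A d1 ?S" "z2 = finsum A d2 ?S"
    unfolding S1(4) S2(4) using S1 S2 d_closed
    by (auto simp: d1_def d2_def intro!: add.finprod_mono_neutral_cong_left)
  then have "z1 \<oplus> z2 = finsum A (\<lambda>g. d1 g \<oplus> d2 g) ?S"
    using d_closed by (simp add: finsum_addf)
  moreover have "\<forall>g\<in>?S. d1 g \<oplus> d2 g \<in> C g"
    using d_in_C S1 S2 additive_subgroup.a_closed[OF subgroup] by blast
  ultimately show ?thesis
    unfolding span_def using S1 S2 by blast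
qed

lemma span_lmult:
  assumes x: "x \<in> carrier A" and d: "d \<in> Zn n"
    and shift: "\<And>g y. g \<in> Zn n \<Longrightarrow> y \<in> C g \<Longrightarrow> x \<otimes> y \<in> C (zadd d g)"
    and z: "z \<in> span"
  shows "x \<otimes> z \<in> span"
proof -
  obtain S c where S: "finite S" "S \<subseteq> Zn n" "\<forall>g\<in>S. c g \<in> C g" "z = finsum A c S"
    using z unfolding span_def by blast
  have c_closed: "c \<in> S \<rightarrow> carrier A"
    using S C_closed by blast
  define c' where "c' h = x \<otimes> c (zadd (zneg d) h)" for h
  have c'_shift: "c' (zadd d g) = x \<otimes> c g" for g
    by (simp add: c'_def flip: zadd_assoc)
  have "inj_on (zadd d) S"
    by (rule inj_onI) (metis zadd_assoc zadd_zneg(2) zadd_zzero(1))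
  then have "x \<otimes> z = finsum A c' (zadd d ` S)"
    using S(4) x c_closed
    by (simp add: finsum_rdistr[OF S(1) x c_closed] finsum_reindex c'_shift Pi_iff)
  moreover have "\<forall>h\<in>zadd d ` S. c' h \<in> C h"
    using S(2,3) d shift c'_shift by auto
  ultimately show ?thesis
    unfolding span_def using S(1,2) d by (auto intro!: exI[of _ "zadd d ` S"] exI[of _ c'])
qed

lemma span_subgroup: "additive_subgroup span A"
proof (rule additive_subgroupI, rule add.subgroupI)
  show "span \<subseteq> carrier A"
    using span_closed by blast
  show "span \<noteq> {}"
    unfolding span_def by (auto intro!: exI[of _ "{}"])
  show "\<ominus> z \<in> span" if "z \<in> span" for z
  proof -
    \<comment> \<open>Negation is left multiplication by the degree-zero element -1.\<close>
    have "\<ominus> \<one> \<otimes> y \<in> C (zadd zzero g)" if "g \<in> Zn n" "y \<in> C g" for g y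
      using that C_closed additive_subgroup.a_inv_closed[OF subgroup] by (simp add: l_minus)
    then have "\<ominus> \<one> \<otimes> z \<in> span"
      using span_lmult[of "\<ominus> \<one>" zzero] \<open>z \<in> span\<close> by simp
    then show ?thesis
      using span_closed[OF \<open>z \<in> span\<close>] by (simp add: l_minus)
  qed
  show "z1 \<oplus> z2 \<in> span" if "z1 \<in> span" "z2 \<in> span" for z1 z2
    using that by (rule span_add)
qed

lemma homogeneous_in_span:
  assumes "g \<in> Zn n" "y \<in> D g" "y \<in> span"
  shows "y \<in> C g"
proof -
  obtain S c where S: "finite S" "S \<subseteq> Zn n" "\<forall>h\<in>S. c h \<in> C h" "y = finsum A c S"
    using assms(3) unfolding span_def by blast
  then have "y = (if g \<in> S then c g else \<zero>)"
    using assms subset_homogeneous by (intro homogeneous_component) blast+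
  then show ?thesis
    using S assms(1) additive_subgroup.zero_closed[OF subgroup] by auto
qed

end

section \<open>Twisting by commuting automorphisms\<close>

locale commuting_shifts =
  fixes R :: "('r, 'c) ring_scheme" and n :: nat and sh :: "nat \<Rightarrow> 'r \<Rightarrow> 'r"
  assumes ring_R: "ring R"
    and shift_iso: "i < n \<Longrightarrow> sh i \<in> ring_iso R R"
    and shift_commute: "i < n \<Longrightarrow> j < n \<Longrightarrow> r \<in> carrier R \<Longrightarrow> sh i (sh j r) = sh j (sh i r)"
begin

abbreviation shift_inv :: "nat \<Rightarrow> 'r \<Rightarrow> 'r" where
  "shift_inv i \<equiv> sig_m R sh i"

lemma shift_bij: "i < n \<Longrightarrow> bij_betw (sh i) (carrier R) (carrier R)"
  using shift_iso by (simp add: ring_iso_def)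

lemma shift_zero: "i < n \<Longrightarrow> sh i \<zero>\<^bsub>R\<^esub> = \<zero>\<^bsub>R\<^esub>"
  using shift_iso ring_R by (simp add: ring_iso_def ring_hom_zero)

lemma shift_inv_bij: "i < n \<Longrightarrow> bij_betw (shift_inv i) (carrier R) (carrier R)"
  unfolding sig_m_def using shift_bij by (rule bij_betw_inv_into)

lemma shift_inv_closed: "i < n \<Longrightarrow> r \<in> carrier R \<Longrightarrow> shift_inv i r \<in> carrier R"
  using shift_inv_bij bij_betwE by blast

lemma shift_shift_inv: "i < n \<Longrightarrow> r \<in> carrier R \<Longrightarrow> sh i (shift_inv i r) = r"
  unfolding sig_m_def using shift_bij bij_betw_inv_into_right by metis

lemma shift_inv_shift: "i < n \<Longrightarrow> r \<in> carrier R \<Longrightarrow> shift_inv i (sh i r) = r"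
  unfolding sig_m_def using shift_bij bij_betw_inv_into_left by metis

definition equivariant :: "('r \<Rightarrow> 'r) \<Rightarrow> bool" where
  "equivariant f \<longleftrightarrow> bij_betw f (carrier R) (carrier R) \<and> f \<zero>\<^bsub>R\<^esub> = \<zero>\<^bsub>R\<^esub>
     \<and> (\<forall>j<n. \<forall>r\<in>carrier R. f (sh j r) = sh j (f r))"

lemma equivariant_closed: "equivariant f \<Longrightarrow> r \<in> carrier R \<Longrightarrow> f r \<in> carrier R"
  unfolding equivariant_def using bij_betwE by blast

lemma equivariant_nonzero:
  assumes "equivariant f" "r \<in> carrier R" "r \<noteq> \<zero>\<^bsub>R\<^esub>"
  shows "f r \<noteq> \<zero>\<^bsub>R\<^esub>"
  using assms ring.ring_simprules(2)[OF ring_R]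
  unfolding equivariant_def bij_betw_def by (metis inj_onD)

lemma equivariant_commute_shift_inv:
  assumes f: "equivariant f" and j: "j < n" and r: "r \<in> carrier R"
  shows "f (shift_inv j r) = shift_inv j (f r)"
proof -
  have "sh j (f (shift_inv j r)) = f r"
    using f j r shift_inv_closed shift_shift_inv unfolding equivariant_def by metis
  moreover have "sh j (shift_inv j (f r)) = f r"
    using f j r equivariant_closed shift_shift_inv by blast
  ultimately show ?thesis
    using j r f shift_inv_closed equivariant_closed shift_bij[OF j]
    unfolding bij_betw_def by (metis inj_onD)
qed

lemma equivariant_id: "equivariant id"
  by (simp add: equivariant_def)

lemma equivariant_comp: "equivariant f \<Longrightarrow> equivariant g \<Longrightarrow> equivariant (f \<circ> g)"
  unfolding equivariant_def by (auto intro: bij_betw_trans) (metis bij_betwE)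

lemma equivariant_funpow: "equivariant f \<Longrightarrow> equivariant (f ^^ k)"
  by (induction k) (auto simp: equivariant_id equivariant_comp simp del: comp_apply)

lemma equivariant_shift: "i < n \<Longrightarrow> equivariant (sh i)"
  unfolding equivariant_def using shift_bij shift_zero shift_commute by simp

lemma equivariant_shift_inv: "i < n \<Longrightarrow> equivariant (shift_inv i)"
proof -
  assume i: "i < n"
  have "shift_inv i \<zero>\<^bsub>R\<^esub> = \<zero>\<^bsub>R\<^esub>"
    using i shift_zero shift_bij ring.ring_simprules(2)[OF ring_R]
    unfolding sig_m_def by (metis bij_betw_inv_into_left)
  moreover have "shift_inv i (sh j r) = sh j (shift_inv i r)" if "j < n" "r \<in> carrier R" for j r
    using equivariant_commute_shift_inv[OF equivariant_shift] i that by simp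
  ultimately show ?thesis
    unfolding equivariant_def using shift_inv_bij i by simp
qed

text \<open>As sh i is sigma_i^(1/2), sigma_pow i k is sigma_i^k.\<close>

definition sigma_pow :: "nat \<Rightarrow> int \<Rightarrow> 'r \<Rightarrow> 'r" where
  "sigma_pow i k =
     (if 0 \<le> k then (sh i \<circ> sh i) ^^ nat k else (shift_inv i \<circ> shift_inv i) ^^ nat (- k))"

lemma equivariant_sigma_pow: "i < n \<Longrightarrow> equivariant (sigma_pow i k)"
  unfolding sigma_pow_def
  by (simp add: equivariant_funpow equivariant_comp equivariant_shift equivariant_shift_inv)

lemma sigma_pow_succ:
  assumes i: "i < n" and r: "r \<in> carrier R"
  shows "sigma_pow i (k + 1) r = sh i (sh i (sigma_pow i k r))"
proof (cases "0 \<le> k")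
  case True
  then have "nat (k + 1) = Suc (nat k)"
    by simp
  then show ?thesis
    using True by (simp add: sigma_pow_def)
next
  case False
  let ?x = "((shift_inv i \<circ> shift_inv i) ^^ nat (- (k + 1))) r"
  have "nat (- k) = Suc (nat (- (k + 1)))"
    using False by simp
  moreover have "?x \<in> carrier R"
    using equivariant_closed[OF equivariant_funpow] equivariant_comp equivariant_shift_inv i r by blast
  ultimately show ?thesis
    using False i by (simp add: sigma_pow_def shift_shift_inv shift_inv_closed)
qed

lemma sigma_pow_pred:
  assumes i: "i < n" and r: "r \<in> carrier R"
  shows "sigma_pow i (k - 1) r = shift_inv i (shift_inv i (sigma_pow i k r))"
proof -
  have x: "sigma_pow i (k - 1) r \<in> carrier R"
    using equivariant_closed[OF equivariant_sigma_pow] i r by blast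
  have "sigma_pow i k r = sh i (sh i (sigma_pow i (k - 1) r))"
    using sigma_pow_succ[OF i r, of "k - 1"] by simp
  then show ?thesis
    using i x by (simp add: shift_inv_shift equivariant_closed[OF equivariant_shift])
qed

primrec twist_upto :: "nat \<Rightarrow> (nat \<Rightarrow> int) \<Rightarrow> 'r \<Rightarrow> 'r" where
  "twist_upto 0 g = id"
| "twist_upto (Suc m) g = sigma_pow m (g m) \<circ> twist_upto m g"

definition twist :: "(nat \<Rightarrow> int) \<Rightarrow> 'r \<Rightarrow> 'r" where
  "twist g = twist_upto n g"

lemma equivariant_twist_upto: "m \<le> n \<Longrightarrow> equivariant (twist_upto m g)"
  by (induction m) (auto simp: equivariant_id equivariant_comp equivariant_sigma_pow simp del: comp_apply)

lemma equivariant_twist: "equivariant (twist g)"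
  unfolding twist_def by (simp add: equivariant_twist_upto)

lemma twist_upto_update:
  assumes "m \<le> n" "i < n" "r \<in> carrier R"
    and step: "\<And>x. x \<in> carrier R \<Longrightarrow> sigma_pow i k x = h (sigma_pow i (g i) x)"
    and h_commute: "\<And>f x. equivariant f \<Longrightarrow> x \<in> carrier R \<Longrightarrow> f (h x) = h (f x)"
  shows "twist_upto m (g(i := k)) r = (if i < m then h (twist_upto m g r) else twist_upto m g r)"
  using assms(1)
proof (induction m)
  case 0
  then show ?case by simp
next
  case (Suc m)
  have x: "twist_upto m g r \<in> carrier R"
    using Suc.prems assms(3) equivariant_closed equivariant_twist_upto by simp
  consider "i < m" | "i = m" | "m < i"
    by linarith
  then show ?case
  proof cases
    case 1
    then show ?thesis
      using Suc x h_commute[OF equivariant_sigma_pow] by simp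
  next
    case 2
    then show ?thesis
      using Suc x step by simp
  next
    case 3
    then show ?thesis
      using Suc by simp
  qed
qed

lemma twist_zzero: "twist zzero = id"
proof -
  have "twist_upto m zzero = id" for m
    by (induction m) (simp_all add: zzero_def sigma_pow_def)
  then show ?thesis
    by (simp add: twist_def)
qed

lemma twist_plus_unitv:
  assumes "i < n" "r \<in> carrier R"
  shows "twist (zadd (unitv i) g) r = sh i (sh i (twist g r))"
  unfolding twist_def zadd_unitv
  using twist_upto_update[where h = "\<lambda>x. sh i (sh i x)"] sigma_pow_succ assms
  by (simp add: equivariant_def equivariant_closed[OF equivariant_shift])

lemma twist_minus_unitv:
  assumes "i < n" "r \<in> carrier R"
  shows "twist (zadd (zneg (unitv i)) g) r = shift_inv i (shift_inv i (twist g r))"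
  unfolding twist_def zadd_zneg_unitv
  using twist_upto_update[where h = "\<lambda>x. shift_inv i (shift_inv i x)"] sigma_pow_pred assms
  by (simp add: equivariant_commute_shift_inv shift_inv_closed)

lemma twist_zadd:
  assumes "d \<in> Zn n" "r \<in> carrier R"
  shows "twist (zadd d g) r = twist d (twist g r)"
  using assms(1)
proof (induction rule: Zn_induct)
  case zero
  then show ?case by (simp add: twist_zzero)
next
  case (plus h i)
  then show ?case
    using assms(2) equivariant_closed[OF equivariant_twist]
    by (simp add: zadd_assoc twist_plus_unitv)
next
  case (minus h i)
  then show ?case
    using assms(2) equivariant_closed[OF equivariant_twist]
    by (simp add: zadd_assoc twist_minus_unitv)
qed

end

section \<open>Homogeneous components of a TGWA\<close>

locale tgwa = commuting_shifts R n sh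
  for R :: "('r, 'c) ring_scheme" and n :: nat and sh :: "nat \<Rightarrow> 'r \<Rightarrow> 'r" +
  fixes A :: "('a, 'b) ring_scheme" (structure)
    and D :: "(nat \<Rightarrow> int) \<Rightarrow> 'a set"
    and rho :: "'r \<Rightarrow> 'a"
    and Xp Xm :: "nat \<Rightarrow> 'a"
    and t :: "nat \<Rightarrow> 'r"
  assumes domain_R: "domain R"
    and is_tgwa: "is_TGWA A D rho Xp Xm R n sh t"
    and t_closed: "i < n \<Longrightarrow> t i \<in> carrier R"
    and t_nonzero: "i < n \<Longrightarrow> t i \<noteq> \<zero>\<^bsub>R\<^esub>"

sublocale tgwa \<subseteq> Zn_graded A n D
  using is_tgwa by (simp add: Zn_graded_def is_TGWA_def)

sublocale tgwa \<subseteq> R: domain R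
  by (fact domain_R)

context tgwa
begin

lemma rho_hom: "rho \<in> ring_hom R A"
  using is_tgwa by (simp add: is_TGWA_def)

lemma rho_inj: "inj_on rho (carrier R)"
  using is_tgwa by (simp add: is_TGWA_def)

lemma rho_image: "rho ` carrier R = D zzero"
  using is_tgwa by (simp add: is_TGWA_def)

lemma Xp_homogeneous: "i < n \<Longrightarrow> Xp i \<in> D (unitv i)"
  using is_tgwa by (simp add: is_TGWA_def)

lemma Xm_homogeneous: "i < n \<Longrightarrow> Xm i \<in> D (zneg (unitv i))"
  using is_tgwa by (simp add: is_TGWA_def)

lemma Xp_rho: "i < n \<Longrightarrow> r \<in> carrier R \<Longrightarrow> Xp i \<otimes> rho r = rho (sh i (sh i r)) \<otimes> Xp i"
  using is_tgwa by (simp add: is_TGWA_def)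

lemma Xm_rho: "i < n \<Longrightarrow> r \<in> carrier R \<Longrightarrow> Xm i \<otimes> rho r = rho (shift_inv i (shift_inv i r)) \<otimes> Xm i"
  using is_tgwa by (simp add: is_TGWA_def)

lemma Xp_Xm: "i < n \<Longrightarrow> Xp i \<otimes> Xm i = rho (sh i (t i))"
  using is_tgwa by (simp add: is_TGWA_def)

lemma Xm_Xp: "i < n \<Longrightarrow> Xm i \<otimes> Xp i = rho (shift_inv i (t i))"
  using is_tgwa by (simp add: is_TGWA_def)

lemma generated_by_rho_Xp_Xm:
  "carrier A = generate_ring A (rho ` carrier R \<union> Xp ` {..<n} \<union> Xm ` {..<n})"
  using is_tgwa by (simp add: is_TGWA_def)

lemma graded_ideal_trivial: "Zn_graded_ideal A n D I \<Longrightarrow> I \<inter> D zzero = {\<zero>} \<Longrightarrow> I = {\<zero>}"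
  using is_tgwa by (simp add: is_TGWA_def)

lemma rho_homogeneous: "r \<in> carrier R \<Longrightarrow> rho r \<in> D zzero"
  using rho_image by blast

lemma degree_zeroE:
  assumes "x \<in> D zzero"
  obtains r where "r \<in> carrier R" "x = rho r"
  using assms rho_image by blast

lemma rho_closed: "r \<in> carrier R \<Longrightarrow> rho r \<in> carrier A"
  using rho_hom by (rule ring_hom_closed)

lemma rho_mult: "r \<in> carrier R \<Longrightarrow> s \<in> carrier R \<Longrightarrow> rho (r \<otimes>\<^bsub>R\<^esub> s) = rho r \<otimes> rho s"
  using rho_hom by (rule ring_hom_mult)

lemma rho_add: "r \<in> carrier R \<Longrightarrow> s \<in> carrier R \<Longrightarrow> rho (r \<oplus>\<^bsub>R\<^esub> s) = rho r \<oplus> rho s"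
  using rho_hom by (rule ring_hom_add)

lemma rho_one: "rho \<one>\<^bsub>R\<^esub> = \<one>"
  using rho_hom by (rule ring_hom_one)

lemma rho_zero: "rho \<zero>\<^bsub>R\<^esub> = \<zero>"
  using rho_hom R.ring_axioms ring_axioms by (rule ring_hom_zero)

lemma rho_a_inv: "r \<in> carrier R \<Longrightarrow> rho (\<ominus>\<^bsub>R\<^esub> r) = \<ominus> rho r"
proof -
  assume r: "r \<in> carrier R"
  then have "rho (\<ominus>\<^bsub>R\<^esub> r) \<oplus> rho r = \<zero>"
    by (simp flip: rho_add add: R.l_neg rho_zero)
  then show ?thesis
    using r by (simp add: minus_equality rho_closed)
qed

lemma rho_minus: "r \<in> carrier R \<Longrightarrow> s \<in> carrier R \<Longrightarrow> rho (r \<ominus>\<^bsub>R\<^esub> s) = rho r \<ominus> rho s"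
  by (simp add: a_minus_def rho_add rho_a_inv)

lemma rho_eq_zero_iff: "r \<in> carrier R \<Longrightarrow> rho r = \<zero> \<longleftrightarrow> r = \<zero>\<^bsub>R\<^esub>"
  using rho_inj rho_zero by (metis R.zero_closed inj_onD)

lemma rho_commute: "r \<in> carrier R \<Longrightarrow> s \<in> carrier R \<Longrightarrow> rho r \<otimes> rho s = rho s \<otimes> rho r"
  by (metis rho_mult R.m_comm)

lemma one_homogeneous: "\<one> \<in> D zzero"
  using rho_homogeneous[OF R.one_closed] by (simp add: rho_one)

lemma one_neq_zero: "\<one> \<noteq> \<zero>"
  using rho_eq_zero_iff[OF R.one_closed] rho_one by simp

lemma Xp_closed: "i < n \<Longrightarrow> Xp i \<in> carrier A"
  using Xp_homogeneous homogeneous_closed unitv_in_Zn by blast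

lemma Xm_closed: "i < n \<Longrightarrow> Xm i \<in> carrier A"
  using Xm_homogeneous homogeneous_closed unitv_in_Zn zneg_in_Zn by blast

lemma carrier_subset_subring:
  assumes "subring M A" "rho ` carrier R \<subseteq> M" "Xp ` {..<n} \<subseteq> M" "Xm ` {..<n} \<subseteq> M"
  shows "carrier A \<subseteq> M"
  unfolding generated_by_rho_Xp_Xm
  using assms rho_closed Xp_closed Xm_closed by (intro generate_ring_min_subring1) auto

definition twisted :: "(nat \<Rightarrow> int) \<Rightarrow> 'a set" where
  "twisted g = {y \<in> D g. \<forall>r\<in>carrier R. y \<otimes> rho r = rho (twist g r) \<otimes> y}"

lemma twisted_subgroup:
  assumes g: "g \<in> Zn n"
  shows "additive_subgroup (twisted g) A"
proof (rule additive_subgroupI, rule add.subgroupI)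
  have [simp]: "y \<in> twisted g \<Longrightarrow> y \<in> carrier A" for y
    using g homogeneous_closed by (auto simp: twisted_def)
  have [simp]: "r \<in> carrier R \<Longrightarrow> rho (twist g r) \<in> carrier A" for r
    using rho_closed equivariant_closed[OF equivariant_twist] by blast
  show "twisted g \<subseteq> carrier A"
    by auto
  have "\<zero> \<in> twisted g"
    using g homogeneous_zero rho_closed by (simp add: twisted_def)
  then show "twisted g \<noteq> {}"
    by blast
  show "\<ominus> y \<in> twisted g" if "y \<in> twisted g" for y
    using that g homogeneous_neg rho_closed by (auto simp: twisted_def l_minus r_minus)
  show "y \<oplus> z \<in> twisted g" if "y \<in> twisted g" "z \<in> twisted g" for y z
    using that g homogeneous_add rho_closed by (auto simp: twisted_def l_distr r_distr)
qed

lemma twisted_mult: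
  assumes d: "d \<in> Zn n" and g: "g \<in> Zn n" and x: "x \<in> twisted d" and y: "y \<in> twisted g"
  shows "x \<otimes> y \<in> twisted (zadd d g)"
  unfolding twisted_def
proof (intro CollectI conjI ballI)
  show "x \<otimes> y \<in> D (zadd d g)"
    using d g x y homogeneous_mult by (simp add: twisted_def)
  fix r
  assume r: "r \<in> carrier R"
  have closed: "x \<in> carrier A" "y \<in> carrier A" "twist g r \<in> carrier R"
    using d g x y r homogeneous_closed equivariant_closed[OF equivariant_twist]
    by (auto simp: twisted_def)
  have "x \<otimes> y \<otimes> rho r = x \<otimes> (rho (twist g r) \<otimes> y)"
    using y r closed rho_closed by (simp add: m_assoc twisted_def)
  also have "\<dots> = (x \<otimes> rho (twist g r)) \<otimes> y"
    using closed rho_closed by (simp add: m_assoc)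
  also have "\<dots> = rho (twist d (twist g r)) \<otimes> x \<otimes> y"
    using x closed by (simp add: twisted_def)
  finally show "x \<otimes> y \<otimes> rho r = rho (twist (zadd d g) r) \<otimes> (x \<otimes> y)"
    using d r closed rho_closed equivariant_closed[OF equivariant_twist] by (simp add: twist_zadd m_assoc)
qed

lemma rho_twisted: "s \<in> carrier R \<Longrightarrow> rho s \<in> twisted zzero"
  unfolding twisted_def by (simp add: rho_homogeneous twist_zzero rho_commute)

lemma Xp_twisted: "i < n \<Longrightarrow> Xp i \<in> twisted (unitv i)"
  using Xp_homogeneous Xp_rho twist_plus_unitv[of i _ zzero]
  by (simp add: twisted_def twist_zzero)

lemma Xm_twisted: "i < n \<Longrightarrow> Xm i \<in> twisted (zneg (unitv i))"
  using Xm_homogeneous Xm_rho twist_minus_unitv[of i _ zzero]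
  by (simp add: twisted_def twist_zzero)

sublocale twisted: Zn_graded_subgroups A n D twisted
  by intro_locales (simp add: Zn_graded_subgroups_axioms_def twisted_subgroup, auto simp: twisted_def)

text \<open>The elements whose left multiplication preserves the span of the twisted components form
  a subring containing the generators; as this span contains the unit, it is everything.\<close>
lemma homogeneous_in_twisted:
  assumes g: "g \<in> Zn n" and y: "y \<in> D g"
  shows "y \<in> twisted g"
proof -
  let ?M = "{x \<in> carrier A. \<forall>w\<in>twisted.span. x \<otimes> w \<in> twisted.span}"
  have twisted_in_M: "x \<in> ?M" if "d \<in> Zn n" "x \<in> twisted d" for d x
    using that twisted_mult twisted.C_closed by (auto intro: twisted.span_lmult)
  have "carrier A \<subseteq> ?M"
  proof (rule carrier_subset_subring)
    show "subring ?M A"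
      using twisted.span_subgroup by (rule left_stabilizer_subring)
    show "rho ` carrier R \<subseteq> ?M"
      using twisted_in_M[OF zzero_in_Zn] rho_twisted by blast
    show "Xp ` {..<n} \<subseteq> ?M"
      using twisted_in_M[OF unitv_in_Zn] Xp_twisted by blast
    show "Xm ` {..<n} \<subseteq> ?M"
      using twisted_in_M[OF zneg_in_Zn[OF unitv_in_Zn]] Xm_twisted by blast
  qed
  moreover have "\<one> \<in> twisted.span"
    using twisted.span_single[OF zzero_in_Zn rho_twisted[OF R.one_closed]] by (simp add: rho_one)
  ultimately have "y \<otimes> \<one> \<in> twisted.span"
    using g y homogeneous_closed by blast
  then show ?thesis
    using g y homogeneous_closed twisted.homogeneous_in_span by simp
qed

lemma homogeneous_rho_commute:
  "g \<in> Zn n \<Longrightarrow> y \<in> D g \<Longrightarrow> r \<in> carrier R \<Longrightarrow> y \<otimes> rho r = rho (twist g r) \<otimes> y"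
  using homogeneous_in_twisted by (simp add: twisted_def)

definition torsion :: "'a set" where
  "torsion = {z \<in> carrier A. \<exists>s\<in>carrier R - {\<zero>\<^bsub>R\<^esub>}. rho s \<otimes> z = \<zero>}"

lemma torsion_subgroup: "additive_subgroup torsion A"
proof (rule additive_subgroupI, rule add.subgroupI)
  show "torsion \<subseteq> carrier A"
    by (auto simp: torsion_def)
  have "\<zero> \<in> torsion"
    unfolding torsion_def using R.one_closed R.one_not_zero rho_closed by auto
  then show "torsion \<noteq> {}"
    by blast
  show "\<ominus> z \<in> torsion" if "z \<in> torsion" for z
    using that rho_closed by (auto simp: torsion_def r_minus)
  show "z1 \<oplus> z2 \<in> torsion" if "z1 \<in> torsion" "z2 \<in> torsion" for z1 z2
  proof -
    obtain s1 where s1: "s1 \<in> carrier R - {\<zero>\<^bsub>R\<^esub>}" "rho s1 \<otimes> z1 = \<zero>" "z1 \<in> carrier A"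
      using \<open>z1 \<in> torsion\<close> unfolding torsion_def by blast
    obtain s2 where s2: "s2 \<in> carrier R - {\<zero>\<^bsub>R\<^esub>}" "rho s2 \<otimes> z2 = \<zero>" "z2 \<in> carrier A"
      using \<open>z2 \<in> torsion\<close> unfolding torsion_def by blast
    have "s1 \<otimes>\<^bsub>R\<^esub> s2 \<in> carrier R - {\<zero>\<^bsub>R\<^esub>}"
      using s1 s2 R.integral by auto
    moreover have "rho (s1 \<otimes>\<^bsub>R\<^esub> s2) \<otimes> z1 = rho s2 \<otimes> (rho s1 \<otimes> z1)"
      using s1 s2 rho_closed by (simp add: R.m_comm[of s1] rho_mult m_assoc)
    moreover have "rho (s1 \<otimes>\<^bsub>R\<^esub> s2) \<otimes> z2 = rho s1 \<otimes> (rho s2 \<otimes> z2)"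
      using s1 s2 rho_closed by (simp add: rho_mult m_assoc)
    ultimately have "s1 \<otimes>\<^bsub>R\<^esub> s2 \<in> carrier R - {\<zero>\<^bsub>R\<^esub>} \<and> rho (s1 \<otimes>\<^bsub>R\<^esub> s2) \<otimes> (z1 \<oplus> z2) = \<zero>"
      using s1 s2 rho_closed by (simp add: r_distr)
    then show ?thesis
      using s1 s2 unfolding torsion_def by blast
  qed
qed

lemma homogeneous_mult_torsion:
  assumes g: "g \<in> Zn n" and y: "y \<in> D g" and z: "z \<in> torsion"
  shows "y \<otimes> z \<in> torsion"
proof -
  obtain s where s: "s \<in> carrier R - {\<zero>\<^bsub>R\<^esub>}" "rho s \<otimes> z = \<zero>" "z \<in> carrier A"
    using z unfolding torsion_def by blast
  have y_closed: "y \<in> carrier A"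
    using g y homogeneous_closed by blast
  have twist_s: "twist g s \<in> carrier R - {\<zero>\<^bsub>R\<^esub>}"
    using s equivariant_closed equivariant_nonzero equivariant_twist by blast
  have "rho (twist g s) \<otimes> (y \<otimes> z) = (rho (twist g s) \<otimes> y) \<otimes> z"
    using twist_s s y_closed rho_closed by (simp add: m_assoc)
  also have "\<dots> = (y \<otimes> rho s) \<otimes> z"
    using g y s by (simp add: homogeneous_rho_commute)
  also have "\<dots> = y \<otimes> (rho s \<otimes> z)"
    using s y_closed rho_closed by (simp add: m_assoc)
  finally have "rho (twist g s) \<otimes> (y \<otimes> z) = \<zero>"
    using s y_closed by simp
  with twist_s
  show ?thesis
    using s y_closed unfolding torsion_def by blast
qed

lemma torsion_ideal: "ideal torsion A"
proof (rule idealI)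
  show "ring A" ..
  show "subgroup torsion (add_monoid A)"
    using torsion_subgroup by (simp add: additive_subgroup_def)
  let ?M = "{x \<in> carrier A. \<forall>z\<in>torsion. x \<otimes> z \<in> torsion}"
  have homogeneous_in_M: "x \<in> ?M" if "d \<in> Zn n" "x \<in> D d" for d x
    using that homogeneous_mult_torsion homogeneous_closed by blast
  have "carrier A \<subseteq> ?M"
  proof (rule carrier_subset_subring)
    show "subring ?M A"
      using torsion_subgroup by (rule left_stabilizer_subring)
    show "rho ` carrier R \<subseteq> ?M"
      using homogeneous_in_M[OF zzero_in_Zn] rho_homogeneous by blast
    show "Xp ` {..<n} \<subseteq> ?M"
      using homogeneous_in_M[OF unitv_in_Zn] Xp_homogeneous by blast
    show "Xm ` {..<n} \<subseteq> ?M"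
      using homogeneous_in_M[OF zneg_in_Zn[OF unitv_in_Zn]] Xm_homogeneous by blast
  qed
  then show "x \<otimes> z \<in> torsion" if "z \<in> torsion" "x \<in> carrier A" for x z
    using that by blast
  show "z \<otimes> x \<in> torsion" if "z \<in> torsion" "x \<in> carrier A" for x z
  proof -
    obtain s where s: "s \<in> carrier R - {\<zero>\<^bsub>R\<^esub>}" "rho s \<otimes> z = \<zero>" "z \<in> carrier A"
      using \<open>z \<in> torsion\<close> unfolding torsion_def by blast
    then have "rho s \<otimes> (z \<otimes> x) = \<zero>"
      using \<open>x \<in> carrier A\<close> rho_closed by (simp flip: m_assoc)
    then show ?thesis
      using s \<open>x \<in> carrier A\<close> unfolding torsion_def by blast
  qed
qed

lemma torsion_graded_ideal: "Zn_graded_ideal A n D torsion"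
  unfolding Zn_graded_ideal_def
proof (intro conjI allI impI ballI)
  show "ideal torsion A"
    by (rule torsion_ideal)
  fix S c g
  assume S: "finite S \<and> S \<subseteq> Zn n \<and> (\<forall>g\<in>S. c g \<in> D g) \<and> finsum A c S \<in> torsion" and g: "g \<in> S"
  obtain s where s: "s \<in> carrier R - {\<zero>\<^bsub>R\<^esub>}" "rho s \<otimes> finsum A c S = \<zero>"
    using S by (auto simp: torsion_def)
  have c_closed: "c \<in> S \<rightarrow> carrier A"
    using S homogeneous_closed by blast
  have "finsum A (\<lambda>h. rho s \<otimes> c h) S = \<zero>"
    using S s c_closed rho_closed by (simp add: finsum_rdistr)
  moreover have "\<forall>h\<in>S. rho s \<otimes> c h \<in> D h"
    using S s homogeneous_mult[OF zzero_in_Zn _ rho_homogeneous] by fastforce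
  ultimately have "rho s \<otimes> c g = \<zero>"
    using S g homogeneous_independent[of S "\<lambda>h. rho s \<otimes> c h"] by blast
  then show "c g \<in> torsion"
    using s g c_closed by (auto simp: torsion_def)
qed

lemma torsion_trivial: "torsion = {\<zero>}"
proof (rule graded_ideal_trivial[OF torsion_graded_ideal])
  have "z = \<zero>" if z: "z \<in> torsion" "z \<in> D zzero" for z
  proof -
    obtain r where r: "r \<in> carrier R" "z = rho r"
      using z(2) by (rule degree_zeroE)
    obtain s where s: "s \<in> carrier R - {\<zero>\<^bsub>R\<^esub>}" "rho s \<otimes> z = \<zero>"
      using z(1) unfolding torsion_def by blast
    then have "rho (s \<otimes>\<^bsub>R\<^esub> r) = \<zero>"
      using r by (simp add: rho_mult)
    then have "s \<otimes>\<^bsub>R\<^esub> r = \<zero>\<^bsub>R\<^esub>"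
      using r s rho_eq_zero_iff by simp
    then show ?thesis
      using r s R.integral rho_zero by auto
  qed
  then show "torsion \<inter> D zzero = {\<zero>}"
    using additive_subgroup.zero_closed[OF torsion_subgroup] homogeneous_zero[OF zzero_in_Zn] by blast
qed

lemma rho_mult_eq_zero:
  "s \<in> carrier R \<Longrightarrow> s \<noteq> \<zero>\<^bsub>R\<^esub> \<Longrightarrow> z \<in> carrier A \<Longrightarrow> rho s \<otimes> z = \<zero> \<Longrightarrow> z = \<zero>"
  using torsion_trivial by (auto simp: torsion_def)

lemma homogeneous_mult_rho_eq_zero:
  assumes "g \<in> Zn n" "x \<in> D g" "s \<in> carrier R" "s \<noteq> \<zero>\<^bsub>R\<^esub>" "x \<otimes> rho s = \<zero>"
  shows "x = \<zero>"
proof -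
  have "rho (twist g s) \<otimes> x = \<zero>"
    using homogeneous_rho_commute[OF assms(1-3)] assms(5) by simp
  then show ?thesis
    using assms homogeneous_closed equivariant_closed[OF equivariant_twist]
      equivariant_nonzero[OF equivariant_twist] rho_mult_eq_zero by blast
qed

definition right_regular :: "'a \<Rightarrow> bool" where
  "right_regular Y \<longleftrightarrow> (\<forall>h\<in>Zn n. \<forall>x\<in>D h. x \<otimes> Y = \<zero> \<longrightarrow> x = \<zero>)"

lemma right_regular_one: "right_regular \<one>"
  unfolding right_regular_def using homogeneous_closed by simp

lemma right_regular_mult:
  assumes d: "d \<in> Zn n" "Y \<in> D d" and "Y' \<in> carrier A" "right_regular Y" "right_regular Y'"
  shows "right_regular (Y \<otimes> Y')"
  unfolding right_regular_def
proof (intro ballI impI)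
  fix h x
  assume h: "h \<in> Zn n" "x \<in> D h" and "x \<otimes> (Y \<otimes> Y') = \<zero>"
  then have "(x \<otimes> Y) \<otimes> Y' = \<zero>"
    using assms homogeneous_closed by (simp add: m_assoc)
  then have "x \<otimes> Y = \<zero>"
    using assms h homogeneous_mult unfolding right_regular_def by (meson zadd_in_Zn)
  then show "x = \<zero>"
    using assms h unfolding right_regular_def by blast
qed

lemma Xp_right_regular:
  assumes i: "i < n"
  shows "right_regular (Xp i)"
  unfolding right_regular_def
proof (intro ballI impI)
  fix h x
  assume h: "h \<in> Zn n" "x \<in> D h" and "x \<otimes> Xp i = \<zero>"
  then have "x \<otimes> rho (sh i (t i)) = \<zero>"
    using i homogeneous_closed Xp_closed Xm_closed by (simp flip: Xp_Xm m_assoc)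
  moreover have "sh i (t i) \<in> carrier R" "sh i (t i) \<noteq> \<zero>\<^bsub>R\<^esub>"
    using i t_closed t_nonzero equivariant_closed equivariant_nonzero equivariant_shift by auto
  ultimately show "x = \<zero>"
    using h homogeneous_mult_rho_eq_zero by blast
qed

lemma Xm_right_regular:
  assumes i: "i < n"
  shows "right_regular (Xm i)"
  unfolding right_regular_def
proof (intro ballI impI)
  fix h x
  assume h: "h \<in> Zn n" "x \<in> D h" and "x \<otimes> Xm i = \<zero>"
  then have "x \<otimes> rho (shift_inv i (t i)) = \<zero>"
    using i homogeneous_closed Xp_closed Xm_closed by (simp flip: Xm_Xp m_assoc)
  moreover have "shift_inv i (t i) \<in> carrier R" "shift_inv i (t i) \<noteq> \<zero>\<^bsub>R\<^esub>"
    using i t_closed t_nonzero equivariant_closed equivariant_nonzero equivariant_shift_inv by auto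
  ultimately show "x = \<zero>"
    using h homogeneous_mult_rho_eq_zero by blast
qed

lemma exists_right_regular:
  assumes "g \<in> Zn n"
  shows "\<exists>Y\<in>D g. right_regular Y"
  using assms
proof (induction rule: Zn_induct)
  case zero
  show ?case
    using one_homogeneous right_regular_one by blast
next
  case (plus h i)
  then obtain Y where "Y \<in> D h" "right_regular Y"
    by blast
  then show ?case
    using plus Xp_homogeneous Xp_right_regular homogeneous_closed homogeneous_mult
    by (meson right_regular_mult unitv_in_Zn)
next
  case (minus h i)
  then obtain Y where "Y \<in> D h" "right_regular Y"
    by blast
  then show ?case
    using minus Xm_homogeneous Xm_right_regular homogeneous_closed homogeneous_mult
    by (meson right_regular_mult unitv_in_Zn zneg_in_Zn)
qed

lemma right_multiples_ideal:
  assumes g: "g \<in> Zn n" and Y: "Y \<in> D (zneg g)"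
  shows "ideal {r \<in> carrier R. \<exists>x\<in>D g. rho r = x \<otimes> Y} R"
    (is "ideal ?I R")
proof (rule idealI[OF R.ring_axioms])
  have Y_closed: "Y \<in> carrier A"
    using homogeneous_closed[OF zneg_in_Zn[OF g] Y(1)] .
  show "subgroup ?I (add_monoid R)"
  proof (rule R.add.subgroupI)
    show "?I \<subseteq> carrier R"
      by blast
    have "rho \<zero>\<^bsub>R\<^esub> = \<zero> \<otimes> Y"
      using Y_closed by (simp add: rho_zero)
    then show "?I \<noteq> {}"
      using g homogeneous_zero by blast
    show "\<ominus>\<^bsub>R\<^esub> r \<in> ?I" if r: "r \<in> ?I" for r
    proof -
      obtain x where x: "r \<in> carrier R" "x \<in> D g" "rho r = x \<otimes> Y"
        using r by blast
      then have "rho (\<ominus>\<^bsub>R\<^esub> r) = (\<ominus> x) \<otimes> Y"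
        using g Y_closed homogeneous_closed by (simp add: rho_a_inv l_minus)
      then show ?thesis
        using x g homogeneous_neg by blast
    qed
    show "r \<oplus>\<^bsub>R\<^esub> s \<in> ?I" if r: "r \<in> ?I" and s: "s \<in> ?I" for r s
    proof -
      obtain x y where x: "r \<in> carrier R" "x \<in> D g" "rho r = x \<otimes> Y"
        and y: "s \<in> carrier R" "y \<in> D g" "rho s = y \<otimes> Y"
        using r s by blast
      then have "rho (r \<oplus>\<^bsub>R\<^esub> s) = (x \<oplus> y) \<otimes> Y"
        using g Y_closed homogeneous_closed by (simp add: rho_add l_distr)
      then show ?thesis
        using x y g homogeneous_add by blast
    qed
  qed
  show "s \<otimes>\<^bsub>R\<^esub> r \<in> ?I" "r \<otimes>\<^bsub>R\<^esub> s \<in> ?I" if r: "r \<in> ?I" and s: "s \<in> carrier R" for r s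
  proof -
    obtain x where x: "r \<in> carrier R" "x \<in> D g" "rho r = x \<otimes> Y"
      using r by blast
    have "rho (s \<otimes>\<^bsub>R\<^esub> r) = (rho s \<otimes> x) \<otimes> Y"
      using s x g Y_closed homogeneous_closed rho_closed by (simp add: rho_mult m_assoc)
    moreover have "rho s \<otimes> x \<in> D g"
      using homogeneous_mult[OF zzero_in_Zn g rho_homogeneous[OF s] x(2)] by simp
    ultimately show "s \<otimes>\<^bsub>R\<^esub> r \<in> ?I" "r \<otimes>\<^bsub>R\<^esub> s \<in> ?I"
      using s x R.m_comm by auto
  qed
qed

lemma right_regular_nonzero: "right_regular Z \<Longrightarrow> Z \<noteq> \<zero>"
  using one_homogeneous one_neq_zero unfolding right_regular_def by fastforce

lemma rho_multiple_of_generator: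
  assumes g: "g \<in> Zn n" and Y: "Y \<in> D (zneg g)" "right_regular Y"
    and c: "c \<in> carrier R" "{r \<in> carrier R. \<exists>x\<in>D g. rho r = x \<otimes> Y} = PIdl\<^bsub>R\<^esub> c"
    and a: "a \<in> D g" "rho c = a \<otimes> Y"
    and x: "x \<in> D g"
  shows "\<exists>k\<in>carrier R. x = rho k \<otimes> a"
proof -
  have closed: "x \<in> carrier A" "a \<in> carrier A" "Y \<in> carrier A"
    using g x a Y homogeneous_closed zneg_in_Zn by blast+
  have "x \<otimes> Y \<in> D zzero"
    using homogeneous_mult[OF g zneg_in_Zn[OF g] x Y(1)] by simp
  then obtain r where r: "r \<in> carrier R" "x \<otimes> Y = rho r"
    by (rule degree_zeroE)
  then have "r \<in> {r \<in> carrier R. \<exists>x\<in>D g. rho r = x \<otimes> Y}"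
    using x by (auto intro!: bexI[of _ x])
  then have "r \<in> PIdl\<^bsub>R\<^esub> c"
    by (simp only: c(2))
  then obtain k where k: "k \<in> carrier R" "r = k \<otimes>\<^bsub>R\<^esub> c"
    unfolding cgenideal_def by blast
  have "(x \<ominus> rho k \<otimes> a) \<otimes> Y = x \<otimes> Y \<ominus> rho k \<otimes> (a \<otimes> Y)"
    using closed rho_closed k by (simp add: a_minus_def l_distr l_minus m_assoc)
  also have "\<dots> = \<zero>"
    using r k a c closed rho_closed by (simp add: rho_mult a_minus_def r_neg)
  finally have "(x \<ominus> rho k \<otimes> a) \<otimes> Y = \<zero>" .
  moreover have "x \<ominus> rho k \<otimes> a \<in> D g"
    using homogeneous_mult[OF zzero_in_Zn g rho_homogeneous[OF k(1)] a(1)] g x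
    unfolding a_minus_def by (simp add: homogeneous_add homogeneous_neg)
  ultimately have "x \<ominus> rho k \<otimes> a = \<zero>"
    using Y(2) g unfolding right_regular_def by blast
  then show ?thesis
    using k(1) closed rho_closed[OF k(1)] r_right_minus_eq by auto
qed

lemma homogeneous_left_generator:
  assumes pid: "principal_domain R" and g: "g \<in> Zn n"
  shows "\<exists>a\<in>D g. a \<noteq> \<zero> \<and> (\<forall>x\<in>D g. \<exists>k\<in>carrier R. x = rho k \<otimes> a)"
proof -
  obtain Y where Y: "Y \<in> D (zneg g)" "right_regular Y"
    using exists_right_regular g zneg_in_Zn by blast
  obtain Z where Z: "Z \<in> D g" "right_regular Z"
    using exists_right_regular g by blast
  let ?I = "{r \<in> carrier R. \<exists>x\<in>D g. rho r = x \<otimes> Y}"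
  obtain c where c: "c \<in> carrier R" "?I = PIdl\<^bsub>R\<^esub> c"
    using principal_domain.exists_gen[OF pid right_multiples_ideal[OF g Y(1)]] by blast
  then have "c \<in> ?I"
    using R.cgenideal_self by blast
  then obtain a where a: "a \<in> D g" "rho c = a \<otimes> Y"
    by blast
  have generates: "\<forall>x\<in>D g. \<exists>k\<in>carrier R. x = rho k \<otimes> a"
    using rho_multiple_of_generator[OF g Y c a] by blast
  moreover have "a \<noteq> \<zero>"
    using generates Z right_regular_nonzero rho_closed by fastforce
  ultimately show ?thesis
    using a(1) by blast
qed

lemma rho_mult_cancel_right:
  assumes "a \<in> carrier A" "a \<noteq> \<zero>" "s \<in> carrier R" "k \<in> carrier R" "rho s \<otimes> a = rho k \<otimes> a"
  shows "s = k"
proof -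
  have "(rho s \<ominus> rho k) \<otimes> a = \<zero>"
    using assms rho_closed by (simp add: a_minus_def l_distr l_minus r_neg)
  then have "rho (s \<ominus>\<^bsub>R\<^esub> k) \<otimes> a = \<zero>"
    using assms by (simp add: rho_minus)
  then have "s \<ominus>\<^bsub>R\<^esub> k = \<zero>\<^bsub>R\<^esub>"
    using assms rho_mult_eq_zero[of "s \<ominus>\<^bsub>R\<^esub> k" a] by auto
  then show ?thesis
    using assms R.r_right_minus_eq[of s k] by simp
qed

lemma left_basis:
  assumes g: "g \<in> Zn n" and a: "a \<in> D g" "a \<noteq> \<zero>"
    and generates: "\<forall>x\<in>D g. \<exists>k\<in>carrier R. x = rho k \<otimes> a"
    and x: "x \<in> D g"
  shows "\<exists>!r. r \<in> D zzero \<and> x = r \<otimes> a"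
proof -
  have a_closed: "a \<in> carrier A"
    using g a homogeneous_closed by blast
  obtain k where k: "k \<in> carrier R" "x = rho k \<otimes> a"
    using generates x by blast
  show ?thesis
  proof (rule ex1I)
    show "rho k \<in> D zzero \<and> x = rho k \<otimes> a"
      using k rho_homogeneous by blast
    show "r = rho k" if r: "r \<in> D zzero \<and> x = r \<otimes> a" for r
    proof -
      obtain s where s: "s \<in> carrier R" "r = rho s"
        using r degree_zeroE by blast
      then have "s = k"
        using r k a(2) a_closed by (intro rho_mult_cancel_right) auto
      then show ?thesis
        using s by simp
    qed
  qed
qed

lemma right_basis:
  assumes g: "g \<in> Zn n" and a: "a \<in> D g" "a \<noteq> \<zero>"
    and generates: "\<forall>x\<in>D g. \<exists>k\<in>carrier R. x = rho k \<otimes> a"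
    and x: "x \<in> D g"
  shows "\<exists>!r. r \<in> D zzero \<and> x = a \<otimes> r"
proof -
  have bij: "bij_betw (twist g) (carrier R) (carrier R)"
    using equivariant_twist unfolding equivariant_def by blast
  have a_twist: "a \<otimes> rho s = rho (twist g s) \<otimes> a" if "s \<in> carrier R" for s
    using homogeneous_rho_commute[OF g a(1) that] .
  obtain k where k: "k \<in> carrier R" "x = rho k \<otimes> a"
    using generates x by blast
  then obtain s where s: "s \<in> carrier R" "k = twist g s"
    using bij by (metis bij_betw_imp_surj_on imageE)
  show ?thesis
  proof (rule ex1I)
    show "rho s \<in> D zzero \<and> x = a \<otimes> rho s"
      using s k a_twist rho_homogeneous by simp
    show "r = rho s" if r: "r \<in> D zzero \<and> x = a \<otimes> r" for r
    proof -
      obtain s' where s': "s' \<in> carrier R" "r = rho s'"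
        using r degree_zeroE by blast
      then have "rho (twist g s') \<otimes> a = rho (twist g s) \<otimes> a"
        using r s k a_twist by simp
      then have "twist g s' = twist g s"
        using s s' a(2) homogeneous_closed[OF g a(1)] equivariant_closed[OF equivariant_twist]
        by (intro rho_mult_cancel_right) auto
      then have "s' = s"
        using bij s(1) s'(1) unfolding bij_betw_def by (auto dest: inj_onD)
      then show ?thesis
        using s' by simp
    qed
  qed
qed

end

theorem mainTheorem8:
  fixes K :: "('k, 'd) ring_scheme"
    and R :: "('r, 'c) ring_scheme"
    and A :: "('a, 'b) ring_scheme"
    and hK :: "'k \<Rightarrow> 'r"
    and n :: nat
    and sh :: "nat \<Rightarrow> 'r \<Rightarrow> 'r"
    and t :: "nat \<Rightarrow> 'r"
    and D :: "(nat \<Rightarrow> int) \<Rightarrow> 'a set"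
    and rho :: "'r \<Rightarrow> 'a"
    and Xp Xm :: "nat \<Rightarrow> 'a"
  assumes "TGW_datum K R hK n sh t"
    and "principal_domain R"
    and "\<forall>i<n. t i \<noteq> \<zero>\<^bsub>R\<^esub>"
    and "TGW_consistent R n sh t"
    and "is_TGWA A D rho Xp Xm R n sh t"
  shows "crystalline_graded A (Zn n) zzero D"
proof -
  interpret tgwa R n sh A D rho Xp Xm t
  proof (rule tgwa.intro[OF commuting_shifts.intro tgwa_axioms.intro])
    show "ring R" "domain R"
      using assms(2) principal_domain.axioms(1) domain.axioms(1) cring.axioms(1) by blast+
  qed (use assms(1,3,5) in \<open>auto simp: TGW_datum_def\<close>)
  show ?thesis
    unfolding crystalline_graded_def
  proof
    fix g
    assume g: "g \<in> Zn n"
    then obtain a where "a \<in> D g" "a \<noteq> \<zero>\<^bsub>A\<^esub>" "\<forall>x\<in>D g. \<exists>k\<in>carrier R. x = rho k \<otimes>\<^bsub>A\<^esub> a"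
      using homogeneous_left_generator[OF assms(2)] by blast
    then show "\<exists>a\<in>D g. (\<forall>x\<in>D g. \<exists>!r. r \<in> D zzero \<and> x = r \<otimes>\<^bsub>A\<^esub> a)
                       \<and> (\<forall>x\<in>D g. \<exists>!r. r \<in> D zzero \<and> x = a \<otimes>\<^bsub>A\<^esub> r)"
      using g left_basis right_basis by blast
  qed
qed

end
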